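(* Let $X$ be a set, let $\mathcal{L}$ be a nest on $X$, and let $Y\subseteq X$. Then $X={\uparrow}Y$ if and only if there exists a subfamily $\mathcal{L}'=\{L_i : i\in I\}\subseteq\mathcal{L}$ with $\bigcap_{i\in I}L_i=\emptyset$ such that $Y\cap L_i\neq\emptyset$ for every $i\in I$.
   Context: A nest on $X$ is a family of subsets of $X$ totally ordered by inclusion. Define $x\triangleleft_{\mathcal{L}} y$ iff there exists $L\in\mathcal{L}$ with $x\in L$ and $y\notin L$. For $Y\subseteq X$, ${\uparrow}Y=\{x\in X : \exists y\in Y,\ y\triangleleft_{\mathcal{L}} x\}$. *)

theory Defs
  imports Main
begin

definition nest :: "'a set \<Rightarrow> 'a set set \<Rightarrow> bool" where
  "nest X \<L> \<longleftrightarrow> (\<forall>A\<in>\<L>. A \<subseteq> X) \<and> (\<forall>A\<in>\<L>. \<forall>B\<in>\<L>. A \<subseteq> B \<or> B \<subseteq> A)"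

definition nest_rel :: "'a set set \<Rightarrow> 'a \<Rightarrow> 'a \<Rightarrow> bool" where
  "nest_rel \<L> x y \<longleftrightarrow> (\<exists>L\<in>\<L>. x \<in> L \<and> y \<notin> L)"

definition nest_up :: "'a set \<Rightarrow> 'a set set \<Rightarrow> 'a set \<Rightarrow> 'a set" where
  "nest_up X \<L> Y = {x \<in> X. \<exists>y\<in>Y. nest_rel \<L> y x}"

end

theory Submission
  imports Defs
begin

text \<open>A point of \<open>X\<close> fails to lie above \<open>Y\<close> exactly when it belongs to every member of
  \<open>\<L>\<close> that meets \<open>Y\<close>, so \<open>X = nest_up X \<L> Y\<close> says that these members, which form the largest
  admissible subfamily, have no common point in \<open>X\<close>.\<close>

lemma nest_up_iff_not_in_Inter_meeting:
  "x \<in> nest_up X \<L> Y \<longleftrightarrow> x \<in> X \<and> x \<notin> \<Inter>{L \<in> \<L>. Y \<inter> L \<noteq> {}}"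
  unfolding nest_up_def nest_rel_def by blast

lemma nest_up_eq_iff_Inter_meeting_disjoint:
  "X = nest_up X \<L> Y \<longleftrightarrow> X \<inter> \<Inter>{L \<in> \<L>. Y \<inter> L \<noteq> {}} = {}"
  using nest_up_iff_not_in_Inter_meeting[of _ X \<L> Y] by blast

lemma Inter_meeting_disjoint_iff_exists_subfamily:
  "X \<inter> \<Inter>{L \<in> \<L>. Y \<inter> L \<noteq> {}} = {} \<longleftrightarrow>
    (\<exists>\<L>'. \<L>' \<subseteq> \<L> \<and> X \<inter> \<Inter>\<L>' = {} \<and> (\<forall>L\<in>\<L>'. Y \<inter> L \<noteq> {}))"
proof
  assume "\<exists>\<L>'. \<L>' \<subseteq> \<L> \<and> X \<inter> \<Inter>\<L>' = {} \<and> (\<forall>L\<in>\<L>'. Y \<inter> L \<noteq> {})"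
  then obtain \<L>' where "\<L>' \<subseteq> \<L>" and disj: "X \<inter> \<Inter>\<L>' = {}"
    and "\<forall>L\<in>\<L>'. Y \<inter> L \<noteq> {}"
    by blast
  then have sub: "\<L>' \<subseteq> {L \<in> \<L>. Y \<inter> L \<noteq> {}}"
    by auto
  have "\<Inter>{L \<in> \<L>. Y \<inter> L \<noteq> {}} \<subseteq> \<Inter>\<L>'"
    using sub by (rule Inter_anti_mono)
  with disj show "X \<inter> \<Inter>{L \<in> \<L>. Y \<inter> L \<noteq> {}} = {}"
    by blast
qed (rule exI[of _ "{L \<in> \<L>. Y \<inter> L \<noteq> {}}"], blast)

theorem proposition4p3:
  fixes X :: "'a set" and \<L> :: "'a set set" and Y :: "'a set"
  assumes "nest X \<L>" and "Y \<subseteq> X"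
  shows "X = nest_up X \<L> Y \<longleftrightarrow>
    (\<exists>\<L>'. \<L>' \<subseteq> \<L> \<and> X \<inter> \<Inter>\<L>' = {} \<and> (\<forall>L\<in>\<L>'. Y \<inter> L \<noteq> {}))"
  by (simp only: nest_up_eq_iff_Inter_meeting_disjoint
      Inter_meeting_disjoint_iff_exists_subfamily)

end
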